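(* Let $G$ be a group, $N\trianglelefteq G$ and $\mathcal{H}$ a family of proper subgroups of $G$ that is strongly divided by $N$. Let $\widetilde{\mathcal{H}}$ denote the family of all finite (nonempty) intersections of elements of $\mathcal{H}$. Then $\widetilde{\mathcal{H}}$ is divided by $N$; moreover (1) $\widetilde{\mathcal{H}}^N=\widetilde{\mathcal{H}^N}$, the family of all finite intersections of elements of $\mathcal{H}^N$, and (2) $\overline{\widetilde{\mathcal{H}}}=\widetilde{\overline{\mathcal{H}}}$, the family of all finite intersections of elements of $\overline{\mathcal{H}}$.
   Context: For a family $\mathcal{K}$ of proper subgroups of $G$ write $\mathcal{K}_N=\{H\in\mathcal{K}: HN\neq G\}$ and $\mathcal{K}^N=\{K\in\mathcal{K}: KN=G\}$; for $H\le G$ let $\overline{H}$ be its image in $G/N$ and $\overline{\mathcal{K}}=\{\overline{H}: H\in\mathcal{K}_N\}$. $\mathcal{K}$ is divided by $N$ if (1) $HN\in\mathcal{K}$ for all $H\in\mathcal{K}_N$, and (2) $HN\cap K\in\mathcal{K}$ for all $H\in\mathcal{K}_N$, $K\in\mathcal{K}^N$. $\mathcal{K}$ is strongly divided by $N$ if (1) $N\subseteq H$ for all $H\in\mathcal{K}_N$, and (2) $(K_1\cap\dots\cap K_m)N=G$ for all finite collections $K_1,\dots,K_m\in\mathcal{K}^N$. *)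

theory Defs
  imports "HOL-Algebra.Algebra"
begin

definition fin_inters :: "'a set set \<Rightarrow> 'a set set" where
  "fin_inters \<K> = {\<Inter>F | F. finite F \<and> F \<noteq> {} \<and> F \<subseteq> \<K>}"

definition proper_subgroup_family :: "('a, 'b) monoid_scheme \<Rightarrow> 'a set set \<Rightarrow> bool" where
  "proper_subgroup_family G \<K> = (\<forall>H\<in>\<K>. subgroup H G \<and> H \<noteq> carrier G)"

definition famN :: "('a, 'b) monoid_scheme \<Rightarrow> 'a set \<Rightarrow> 'a set set \<Rightarrow> 'a set set" where
  "famN G N \<K> = {H \<in> \<K>. H <#>\<^bsub>G\<^esub> N \<noteq> carrier G}"

definition famUN :: "('a, 'b) monoid_scheme \<Rightarrow> 'a set \<Rightarrow> 'a set set \<Rightarrow> 'a set set" where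
  "famUN G N \<K> = {K \<in> \<K>. K <#>\<^bsub>G\<^esub> N = carrier G}"

text \<open>Image of a subgroup in G/N (a set of cosets).\<close>
definition bar :: "('a, 'b) monoid_scheme \<Rightarrow> 'a set \<Rightarrow> 'a set \<Rightarrow> 'a set set" where
  "bar G N H = (\<lambda>h. N #>\<^bsub>G\<^esub> h) ` H"

definition bar_fam :: "('a, 'b) monoid_scheme \<Rightarrow> 'a set \<Rightarrow> 'a set set \<Rightarrow> 'a set set set" where
  "bar_fam G N \<K> = bar G N ` famN G N \<K>"

definition divided_by :: "('a, 'b) monoid_scheme \<Rightarrow> 'a set \<Rightarrow> 'a set set \<Rightarrow> bool" where
  "divided_by G N \<K> =
    ((\<forall>H \<in> famN G N \<K>. H <#>\<^bsub>G\<^esub> N \<in> \<K>) \<and>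
     (\<forall>H \<in> famN G N \<K>. \<forall>K \<in> famUN G N \<K>. (H <#>\<^bsub>G\<^esub> N) \<inter> K \<in> \<K>))"

definition strongly_divided_by :: "('a, 'b) monoid_scheme \<Rightarrow> 'a set \<Rightarrow> 'a set set \<Rightarrow> bool" where
  "strongly_divided_by G N \<K> =
    ((\<forall>H \<in> famN G N \<K>. N \<subseteq> H) \<and>
     (\<forall>F. finite F \<and> F \<noteq> {} \<and> F \<subseteq> famUN G N \<K> \<longrightarrow> (\<Inter>F) <#>\<^bsub>G\<^esub> N = carrier G))"

end

theory Submission
  imports Defs
begin

text \<open>A finite intersection of members of \<open>\<H>\<close> is \<open>A \<inter> C\<close>, where \<open>A\<close> is the
  intersection of its members in \<open>\<H>\<^sub>N\<close> (all of which contain \<open>N\<close>) and \<open>C\<close> that of its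
  members in \<open>\<H>\<^sup>N\<close>. Strong division gives \<open>CN = G\<close>, so Dedekind's modular law yields
  \<open>(A \<inter> C)N = A\<close>, and \<open>A \<inter> C\<close> and \<open>A\<close> have the same image in \<open>G/N\<close>. Hence
  \<open>(A \<inter> C)N = G\<close> exactly when no member lies in \<open>\<H>\<^sub>N\<close>, and otherwise \<open>(A \<inter> C)N\<close> and
  the image of \<open>A \<inter> C\<close> are intersections of members of \<open>\<H>\<^sub>N\<close> and of their images.\<close>

lemma fin_intersI: "finite F \<Longrightarrow> F \<noteq> {} \<Longrightarrow> F \<subseteq> \<K> \<Longrightarrow> \<Inter>F \<in> fin_inters \<K>"
  unfolding fin_inters_def by blast

lemma fin_intersE:
  assumes "Z \<in> fin_inters \<K>"
  obtains F where "Z = \<Inter>F" "finite F" "F \<noteq> {}" "F \<subseteq> \<K>"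
  using assms unfolding fin_inters_def by blast

lemma (in group) proper_subgroup_family_fin_inters:
  assumes "proper_subgroup_family G \<K>"
  shows "proper_subgroup_family G (fin_inters \<K>)"
  unfolding proper_subgroup_family_def
proof
  fix Z assume "Z \<in> fin_inters \<K>"
  then obtain F where F: "Z = \<Inter>F" "finite F" "F \<noteq> {}" "F \<subseteq> \<K>"
    by (rule fin_intersE)
  have sub: "\<And>H. H \<in> F \<Longrightarrow> subgroup H G \<and> H \<noteq> carrier G"
    using assms F(4) unfolding proper_subgroup_family_def by blast
  obtain H where H: "H \<in> F" using F(3) by blast
  have "subgroup Z G" unfolding F(1) using sub F(3) by (intro subgroups_Inter) auto
  moreover have "Z \<noteq> carrier G"
    using F(1) H sub[OF H] subgroup.subset by blast
  ultimately show "subgroup Z G \<and> Z \<noteq> carrier G" ..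
qed

lemma (in group) carrier_set_mult_subgroup:
  assumes "subgroup N G"
  shows "carrier G <#> N = carrier G"
proof
  show "carrier G <#> N \<subseteq> carrier G"
    using assms subgroup.subset by (fastforce simp: set_mult_def)
  show "carrier G \<subseteq> carrier G <#> N"
  proof
    fix x assume "x \<in> carrier G"
    then have "x = x \<otimes> \<one>" by simp
    with \<open>x \<in> carrier G\<close> show "x \<in> carrier G <#> N"
      using subgroup.one_closed[OF assms] unfolding set_mult_def by blast
  qed
qed

lemma (in group) set_mult_Int_supplement:
  assumes A: "subgroup A G" "N \<subseteq> A" and N: "subgroup N G"
    and C: "C \<subseteq> carrier G" "C <#> N = carrier G"
  shows "(A \<inter> C) <#> N = A"
proof
  show "(A \<inter> C) <#> N \<subseteq> A"
    using subgroup.m_closed[OF A(1)] A(2) by (auto simp: set_mult_def)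
  show "A \<subseteq> (A \<inter> C) <#> N"
  proof
    fix x assume x: "x \<in> A"
    then have "x \<in> C <#> N" using C(2) subgroup.subset[OF A(1)] by blast
    then obtain c n where cn: "c \<in> C" "n \<in> N" "x = c \<otimes> n"
      unfolding set_mult_def by blast
    have "c \<in> carrier G" "n \<in> carrier G" using cn C(1) subgroup.mem_carrier[OF N] by auto
    then have "c = x \<otimes> inv n" using cn(3) by (simp add: m_assoc)
    moreover have "inv n \<in> A" using A(2) subgroup.m_inv_closed[OF N cn(2)] by blast
    ultimately have "c \<in> A" using subgroup.m_closed[OF A(1) x] by simp
    with cn show "x \<in> (A \<inter> C) <#> N" by (auto simp: set_mult_def)
  qed
qed

lemma (in normal) bar_set_mult:
  assumes K: "K \<subseteq> carrier G"
  shows "bar G H (K <#> H) = bar G H K"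
proof -
  have "H #> (k \<otimes> n) = H #> k" if "k \<in> K" "n \<in> H" for k n
  proof -
    have k: "k \<in> carrier G" and n: "n \<in> carrier G" using that K by auto
    have "k \<otimes> n \<otimes> inv k \<in> H" using inv_op_closed2[OF k that(2)] .
    moreover have "k \<otimes> n = (k \<otimes> n \<otimes> inv k) \<otimes> k" using k n by (simp add: m_assoc)
    ultimately have "k \<otimes> n \<in> H #> k" unfolding r_coset_def by blast
    then show ?thesis by (rule repr_independence[OF _ k subgroup_axioms, symmetric])
  qed
  moreover have "k \<in> K <#> H" if "k \<in> K" for k
  proof -
    have "k = k \<otimes> \<one>" using that K by auto
    with that show ?thesis
      using subgroup.one_closed[OF subgroup_axioms] unfolding set_mult_def by blast
  qed
  ultimately show ?thesis
    unfolding bar_def by (fastforce simp: set_mult_def image_iff)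
qed

lemma (in group) bar_Inter:
  assumes N: "subgroup N G" and F: "F \<noteq> {}"
    and sub: "\<And>H. H \<in> F \<Longrightarrow> subgroup H G" "\<And>H. H \<in> F \<Longrightarrow> N \<subseteq> H"
  shows "bar G N (\<Inter>F) = \<Inter>(bar G N ` F)"
proof
  show "bar G N (\<Inter>F) \<subseteq> \<Inter>(bar G N ` F)" unfolding bar_def by auto
  show "\<Inter>(bar G N ` F) \<subseteq> bar G N (\<Inter>F)"
  proof
    fix c assume c: "c \<in> \<Inter>(bar G N ` F)"
    obtain H0 where H0: "H0 \<in> F" using F by blast
    then obtain h0 where h0: "h0 \<in> H0" "c = N #> h0" using c unfolding bar_def by auto
    have "h0 \<in> H" if H: "H \<in> F" for H
    proof -
      obtain h where h: "h \<in> H" "c = N #> h" using c H unfolding bar_def by auto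
      have "h0 \<in> carrier G" using h0(1) subgroup.mem_carrier[OF sub(1)[OF H0]] by blast
      then have "h0 \<in> N #> h0" using N by (rule rcos_self)
      then have "h0 \<in> N #> h" using h(2) h0(2) by simp
      then obtain n where n: "n \<in> N" "h0 = n \<otimes> h" unfolding r_coset_def by blast
      have "n \<in> H" using n(1) sub(2)[OF H] by blast
      then show ?thesis unfolding n(2) using subgroup.m_closed[OF sub(1)[OF H] _ h(1)] by blast
    qed
    with h0 show "c \<in> bar G N (\<Inter>F)" unfolding bar_def by blast
  qed
qed

locale strongly_divided_family = normal N G for N and G (structure) +
  fixes \<H> :: "'a set set"
  assumes proper: "proper_subgroup_family G \<H>"
    and strongly_divided: "strongly_divided_by G N \<H>"
begin

lemma member_subgroup: "H \<in> \<H> \<Longrightarrow> subgroup H G"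
  and member_proper: "H \<in> \<H> \<Longrightarrow> H \<noteq> carrier G"
  using proper unfolding proper_subgroup_family_def by auto

lemma famN_contains_normal: "H \<in> famN G N \<H> \<Longrightarrow> N \<subseteq> H"
  using strongly_divided unfolding strongly_divided_by_def by blast

lemma Inter_famUN_set_mult:
  "finite F \<Longrightarrow> F \<noteq> {} \<Longrightarrow> F \<subseteq> famUN G N \<H> \<Longrightarrow> \<Inter>F <#> N = carrier G"
  using strongly_divided unfolding strongly_divided_by_def by blast

lemma Inter_subset_carrier: "F \<subseteq> \<H> \<Longrightarrow> F \<noteq> {} \<Longrightarrow> \<Inter>F \<subseteq> carrier G"
  using member_subgroup subgroup.subset by blast

lemma Inter_set_mult_famN:
  assumes F: "finite F" "F \<subseteq> \<H>" and meets: "F \<inter> famN G N \<H> \<noteq> {}"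
  shows "\<Inter>F <#> N = \<Inter>(F \<inter> famN G N \<H>)"
    and "bar G N (\<Inter>F) = \<Inter>(bar G N ` (F \<inter> famN G N \<H>))"
proof -
  define A where "A = \<Inter>(F \<inter> famN G N \<H>)"
  define C where "C = carrier G \<inter> \<Inter>(F \<inter> famUN G N \<H>)"
  have famN_sub: "subgroup H G" "N \<subseteq> H" if "H \<in> F \<inter> famN G N \<H>" for H
    using that F(2) member_subgroup famN_contains_normal by auto
  have A: "subgroup A G" "N \<subseteq> A"
    unfolding A_def using famN_sub meets by (auto intro: subgroups_Inter)
  have "C <#> N = carrier G"
  proof (cases "F \<inter> famUN G N \<H> = {}")
    case True
    then show ?thesis
      unfolding C_def using carrier_set_mult_subgroup[OF subgroup_axioms] by simp
  next
    case False
    have "\<Inter>(F \<inter> famUN G N \<H>) \<subseteq> carrier G"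
      using Inter_subset_carrier[OF _ False] F(2) by blast
    then have "C = \<Inter>(F \<inter> famUN G N \<H>)" unfolding C_def by blast
    then show ?thesis using Inter_famUN_set_mult F(1) False by simp
  qed
  moreover have FG: "\<Inter>F \<subseteq> carrier G"
    using Inter_subset_carrier F(2) meets by blast
  have "F = (F \<inter> famN G N \<H>) \<union> (F \<inter> famUN G N \<H>)"
    using F(2) unfolding famN_def famUN_def by blast
  then have "\<Inter>F = A \<inter> \<Inter>(F \<inter> famUN G N \<H>)"
    unfolding A_def by (metis Inter_Un_distrib)
  with FG have "\<Inter>F = A \<inter> C" unfolding C_def by blast
  ultimately have mult: "\<Inter>F <#> N = A"
    using set_mult_Int_supplement[OF A subgroup_axioms] C_def by simp
  then show "\<Inter>F <#> N = \<Inter>(F \<inter> famN G N \<H>)" unfolding A_def .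
  have "bar G N (\<Inter>F) = bar G N A"
    using bar_set_mult[OF FG] mult by simp
  also have "\<dots> = \<Inter>(bar G N ` (F \<inter> famN G N \<H>))"
    unfolding A_def using famN_sub meets by (intro bar_Inter[OF subgroup_axioms]) auto
  finally show "bar G N (\<Inter>F) = \<Inter>(bar G N ` (F \<inter> famN G N \<H>))" .
qed

lemma Inter_set_mult_eq_carrier_iff:
  assumes F: "finite F" "F \<noteq> {}" "F \<subseteq> \<H>"
  shows "\<Inter>F <#> N = carrier G \<longleftrightarrow> F \<subseteq> famUN G N \<H>"
proof
  assume "F \<subseteq> famUN G N \<H>"
  then show "\<Inter>F <#> N = carrier G" using Inter_famUN_set_mult F by blast
next
  assume full: "\<Inter>F <#> N = carrier G"
  show "F \<subseteq> famUN G N \<H>"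
  proof (rule ccontr)
    assume "\<not> F \<subseteq> famUN G N \<H>"
    then obtain H where H: "H \<in> F" "H \<in> famN G N \<H>"
      using F(3) unfolding famN_def famUN_def by blast
    then have "F \<inter> famN G N \<H> \<noteq> {}" by blast
    then have "carrier G = \<Inter>(F \<inter> famN G N \<H>)"
      using full Inter_set_mult_famN(1)[OF F(1,3)] by simp
    also have "\<dots> \<subseteq> H" using H by blast
    finally show False
      using member_proper[of H] member_subgroup[of H] subgroup.subset H(1) F(3) by blast
  qed
qed

lemma famUN_fin_inters: "famUN G N (fin_inters \<H>) = fin_inters (famUN G N \<H>)"
proof
  show "famUN G N (fin_inters \<H>) \<subseteq> fin_inters (famUN G N \<H>)"
  proof
    fix Z assume Z: "Z \<in> famUN G N (fin_inters \<H>)"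
    then obtain F where F: "Z = \<Inter>F" "finite F" "F \<noteq> {}" "F \<subseteq> \<H>"
      unfolding famUN_def by (auto elim: fin_intersE)
    then have "F \<subseteq> famUN G N \<H>"
      using Z Inter_set_mult_eq_carrier_iff unfolding famUN_def by blast
    with F show "Z \<in> fin_inters (famUN G N \<H>)" by (auto intro: fin_intersI)
  qed
  show "fin_inters (famUN G N \<H>) \<subseteq> famUN G N (fin_inters \<H>)"
  proof
    fix Z assume "Z \<in> fin_inters (famUN G N \<H>)"
    then obtain F where F: "Z = \<Inter>F" "finite F" "F \<noteq> {}" "F \<subseteq> famUN G N \<H>"
      by (rule fin_intersE)
    moreover have "F \<subseteq> \<H>" using F(4) unfolding famUN_def by blast
    ultimately show "Z \<in> famUN G N (fin_inters \<H>)"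
      using Inter_famUN_set_mult unfolding famUN_def by (auto intro: fin_intersI)
  qed
qed

lemma famN_fin_intersE:
  assumes "Z \<in> famN G N (fin_inters \<H>)"
  obtains F where "finite F" "F \<noteq> {}" "F \<subseteq> famN G N \<H>"
    and "Z <#> N = \<Inter>F" "bar G N Z = \<Inter>(bar G N ` F)"
proof -
  obtain F where F: "Z = \<Inter>F" "finite F" "F \<noteq> {}" "F \<subseteq> \<H>"
    using assms unfolding famN_def by (auto elim: fin_intersE)
  have "\<not> F \<subseteq> famUN G N \<H>"
    using assms F Inter_set_mult_eq_carrier_iff unfolding famN_def by blast
  then have "F \<inter> famN G N \<H> \<noteq> {}"
    using F(4) unfolding famN_def famUN_def by blast
  with F show ?thesis
    using that[of "F \<inter> famN G N \<H>"] Inter_set_mult_famN[OF F(2,4)] by auto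
qed

lemma Inter_famN_in_famN_fin_inters:
  assumes F: "finite F" "F \<noteq> {}" "F \<subseteq> famN G N \<H>"
  shows "\<Inter>F \<in> famN G N (fin_inters \<H>)" and "bar G N (\<Inter>F) = \<Inter>(bar G N ` F)"
proof -
  have FH: "F \<subseteq> \<H>" and FN: "F \<inter> famN G N \<H> = F" using F(3) unfolding famN_def by auto
  have "\<not> F \<subseteq> famUN G N \<H>" using F(2,3) unfolding famN_def famUN_def by blast
  then have "\<Inter>F <#> N \<noteq> carrier G" using Inter_set_mult_eq_carrier_iff F(1,2) FH by blast
  then show "\<Inter>F \<in> famN G N (fin_inters \<H>)"
    using F(1,2) FH unfolding famN_def by (auto intro: fin_intersI)
  show "bar G N (\<Inter>F) = \<Inter>(bar G N ` F)"
    using Inter_set_mult_famN(2)[OF F(1) FH] F(2) FN by simp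
qed

lemma divided_by_fin_inters: "divided_by G N (fin_inters \<H>)"
  unfolding divided_by_def
proof (intro conjI ballI)
  fix Z assume "Z \<in> famN G N (fin_inters \<H>)"
  then obtain F where "finite F" "F \<noteq> {}" "F \<subseteq> famN G N \<H>" "Z <#> N = \<Inter>F"
    by (rule famN_fin_intersE)
  then show "Z <#> N \<in> fin_inters \<H>" unfolding famN_def by (auto intro: fin_intersI)
next
  fix Z K assume Z: "Z \<in> famN G N (fin_inters \<H>)" and K: "K \<in> famUN G N (fin_inters \<H>)"
  obtain F1 where F1: "finite F1" "F1 \<noteq> {}" "F1 \<subseteq> famN G N \<H>" "Z <#> N = \<Inter>F1"
    using Z by (rule famN_fin_intersE)
  obtain F2 where F2: "K = \<Inter>F2" "finite F2" "F2 \<subseteq> famUN G N \<H>"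
    using K unfolding famUN_fin_inters by (rule fin_intersE)
  have "(Z <#> N) \<inter> K = \<Inter>(F1 \<union> F2)" using F1(4) F2(1) by auto
  moreover have "F1 \<union> F2 \<subseteq> \<H>" using F1(3) F2(3) unfolding famN_def famUN_def by blast
  ultimately show "(Z <#> N) \<inter> K \<in> fin_inters \<H>"
    using F1(1,2) F2(2) by (auto intro: fin_intersI)
qed

lemma bar_fam_fin_inters: "bar_fam G N (fin_inters \<H>) = fin_inters (bar_fam G N \<H>)"
proof
  show "bar_fam G N (fin_inters \<H>) \<subseteq> fin_inters (bar_fam G N \<H>)"
  proof
    fix Y assume "Y \<in> bar_fam G N (fin_inters \<H>)"
    then obtain Z where Z: "Z \<in> famN G N (fin_inters \<H>)" "Y = bar G N Z"
      unfolding bar_fam_def by blast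
    obtain F where F: "finite F" "F \<noteq> {}" "F \<subseteq> famN G N \<H>" "bar G N Z = \<Inter>(bar G N ` F)"
      using Z(1) by (rule famN_fin_intersE)
    have "\<Inter>(bar G N ` F) \<in> fin_inters (bar_fam G N \<H>)"
      using F(1-3) unfolding bar_fam_def by (intro fin_intersI) auto
    then show "Y \<in> fin_inters (bar_fam G N \<H>)" using Z(2) F(4) by simp
  qed
  show "fin_inters (bar_fam G N \<H>) \<subseteq> bar_fam G N (fin_inters \<H>)"
  proof
    fix Y assume "Y \<in> fin_inters (bar_fam G N \<H>)"
    then obtain S where S: "Y = \<Inter>S" "finite S" "S \<noteq> {}" "S \<subseteq> bar G N ` famN G N \<H>"
      unfolding bar_fam_def by (rule fin_intersE)
    then obtain F where F: "F \<subseteq> famN G N \<H>" "finite F" "S = bar G N ` F"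
      by (meson finite_subset_image)
    with S(3) have "F \<noteq> {}" by blast
    with F S(1) show "Y \<in> bar_fam G N (fin_inters \<H>)"
      using Inter_famN_in_famN_fin_inters unfolding bar_fam_def by (metis image_eqI)
  qed
qed

end

theorem lemma3p18:
  fixes G :: "('a, 'b) monoid_scheme" and N :: "'a set" and \<H> :: "'a set set"
  assumes "group G"
    and "N \<lhd> G"
    and "proper_subgroup_family G \<H>"
    and "strongly_divided_by G N \<H>"
  shows "proper_subgroup_family G (fin_inters \<H>)
    \<and> divided_by G N (fin_inters \<H>)
    \<and> famUN G N (fin_inters \<H>) = fin_inters (famUN G N \<H>)
    \<and> bar_fam G N (fin_inters \<H>) = fin_inters (bar_fam G N \<H>)"
proof -
  interpret strongly_divided_family N G \<H>
    using assms by (simp add: strongly_divided_family_def strongly_divided_family_axioms_def)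
  show ?thesis
    using proper_subgroup_family_fin_inters[OF proper] divided_by_fin_inters
      famUN_fin_inters bar_fam_fin_inters by blast
qed

end
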